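(* Let $a=(a_1,a_2,\dots)$ be any real sequence, $p\in[1,\infty)$ and $w$ a weight sequence. Then $$\sup_{\sigma\in\Pi}\Big(\sum_{i=1}^\infty |a_{\sigma_i}|^p w_i\Big)^{1/p}=\sup_{\sigma\in\Psi}\Big(\sum_{i=1}^\infty |a_{\sigma_i}|^p w_i\Big)^{1/p},$$ where both sides are understood in $[0,+\infty]$.
   Context: A weight sequence is a sequence $w=(w_i)$ of positive reals with $w_1=1\ge w_2\ge\dots$, $w_i\to0$, and $\sum_i w_i=+\infty$. $\Pi$ denotes the set of all bijections $\sigma:\mathbb{N}\to\mathbb{N}$ (written as sequences $(\sigma_1,\sigma_2,\dots)$) and $\Psi$ the set of all injective maps $\sigma:\mathbb{N}\to\mathbb{N}$. *)

theory Defs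
  imports "HOL-Analysis.Analysis"
begin

text \<open>Weight sequence (0-based indexing: w 0 plays the role of w_1).\<close>
definition weight_seq :: "(nat \<Rightarrow> real) \<Rightarrow> bool" where
  "weight_seq w \<longleftrightarrow> (\<forall>i. w i > 0) \<and> w 0 = 1 \<and> decseq w \<and> w \<longlonglongrightarrow> 0 \<and> \<not> summable w"

definition enn_root :: "real \<Rightarrow> ennreal \<Rightarrow> ennreal" where
  "enn_root p x = (if x = top then top else ennreal (enn2real x powr (1 / p)))"

definition weighted_val :: "real \<Rightarrow> (nat \<Rightarrow> real) \<Rightarrow> (nat \<Rightarrow> real) \<Rightarrow> (nat \<Rightarrow> nat) \<Rightarrow> ennreal" where
  "weighted_val p w a \<sigma> = enn_root p (\<Sum>i. ennreal (\<bar>a (\<sigma> i)\<bar> powr p * w i))"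

end

theory Submission
  imports Defs
begin

text \<open>Every partial sum \<open>\<Sum>i<N. c (\<sigma> i) i\<close> of an injection \<open>\<sigma>\<close> is also a partial sum of a
  bijection agreeing with \<open>\<sigma>\<close> on \<open>{..<N}\<close>, so the two suprema of the series coincide;
  and \<open>enn_root p\<close>, an order isomorphism of \<open>[0, \<infinity>]\<close>, commutes with suprema.\<close>

lemma inj_on_finite_extends_to_bij:
  fixes \<sigma> :: "nat \<Rightarrow> nat"
  assumes "finite A" and "inj_on \<sigma> A"
  obtains \<tau> where "bij \<tau>" and "\<And>i. i \<in> A \<Longrightarrow> \<tau> i = \<sigma> i"
proof -
  define g where "g = enumerate (- \<sigma> ` A) \<circ> inv_into UNIV (enumerate (- A))"
  have "infinite (- A)" and "infinite (- \<sigma> ` A)"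
    using assms(1) by (simp_all add: Compl_eq_Diff_UNIV)
  then have "bij_betw g (- A) (- \<sigma> ` A)"
    unfolding g_def by (intro bij_betw_trans[OF bij_betw_inv_into bij_enumerate] bij_enumerate)
  moreover have "bij_betw \<sigma> A (\<sigma> ` A)"
    using assms(2) by (simp add: bij_betw_imageI)
  ultimately have "bij_betw (\<lambda>i. if i \<in> A then \<sigma> i else g i) (A \<union> - A) (\<sigma> ` A \<union> - \<sigma> ` A)"
    by (intro bij_betw_disjoint_Un) auto
  then show thesis
    by (intro that[of "\<lambda>i. if i \<in> A then \<sigma> i else g i"]) auto
qed

lemma SUP_bij_suminf_eq_SUP_inj:
  fixes c :: "nat \<Rightarrow> nat \<Rightarrow> 'a::{canonically_ordered_monoid_add, linorder_topology, complete_linorder}"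
  shows "(SUP \<sigma>\<in>{\<sigma>. bij \<sigma>}. \<Sum>i. c (\<sigma> i) i) = (SUP \<sigma>\<in>{\<sigma>. inj \<sigma>}. \<Sum>i. c (\<sigma> i) i)"
proof (rule antisym)
  show "(SUP \<sigma>\<in>{\<sigma>. bij \<sigma>}. \<Sum>i. c (\<sigma> i) i) \<le> (SUP \<sigma>\<in>{\<sigma>. inj \<sigma>}. \<Sum>i. c (\<sigma> i) i)"
    by (rule SUP_subset_mono) (auto simp: bij_is_inj)
next
  show "(SUP \<sigma>\<in>{\<sigma>. inj \<sigma>}. \<Sum>i. c (\<sigma> i) i) \<le> (SUP \<tau>\<in>{\<tau>. bij \<tau>}. \<Sum>i. c (\<tau> i) i)"
  proof (intro SUP_least suminf_le_const summableI)
    fix \<sigma> :: "nat \<Rightarrow> nat" and N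
    assume "\<sigma> \<in> {\<sigma>. inj \<sigma>}"
    then obtain \<tau> where "bij \<tau>" and \<tau>: "\<And>i. i \<in> {..<N} \<Longrightarrow> \<tau> i = \<sigma> i"
      using inj_on_finite_extends_to_bij[of "{..<N}" \<sigma>] by (auto intro: inj_on_subset)
    have "(\<Sum>i<N. c (\<sigma> i) i) = (\<Sum>i<N. c (\<tau> i) i)"
      using \<tau> by simp
    also have "\<dots> \<le> (\<Sum>i. c (\<tau> i) i)"
      by (intro sum_le_suminf summableI) auto
    also have "\<dots> \<le> (SUP \<tau>\<in>{\<tau>. bij \<tau>}. \<Sum>i. c (\<tau> i) i)"
      using \<open>bij \<tau>\<close> by (intro SUP_upper) simp
    finally show "(\<Sum>i<N. c (\<sigma> i) i) \<le> (SUP \<tau>\<in>{\<tau>. bij \<tau>}. \<Sum>i. c (\<tau> i) i)" .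
  qed
qed

lemma enn_root_le_ennreal_iff:
  assumes "p > 0" and "t \<ge> 0"
  shows "enn_root p x \<le> ennreal t \<longleftrightarrow> x \<le> ennreal (t powr p)"
proof (cases x)
  case (real u)
  then have "enn_root p x \<le> ennreal t \<longleftrightarrow> u powr (1 / p) \<le> t"
    using assms by (simp add: enn_root_def)
  also have "\<dots> \<longleftrightarrow> u \<le> t powr p"
  proof
    assume "u powr (1 / p) \<le> t"
    then have "(u powr (1 / p)) powr p \<le> t powr p"
      using assms by (intro powr_mono2) auto
    then show "u \<le> t powr p"
      using assms \<open>u \<ge> 0\<close> by (simp add: powr_powr)
  next
    assume "u \<le> t powr p"
    then have "u powr (1 / p) \<le> (t powr p) powr (1 / p)"
      using assms \<open>u \<ge> 0\<close> by (intro powr_mono2) auto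
    then show "u powr (1 / p) \<le> t"
      using assms by (simp add: powr_powr)
  qed
  finally show ?thesis
    using real by simp
qed (simp add: enn_root_def top_unique)

lemma enn_root_mono:
  assumes "p > 0" and "x \<le> y"
  shows "enn_root p x \<le> enn_root p y"
proof (cases y)
  case (real u)
  have "x \<le> ennreal ((u powr (1 / p)) powr p)"
    using assms real by (simp add: powr_powr)
  moreover have "enn_root p y = ennreal (u powr (1 / p))"
    using real by (simp add: enn_root_def)
  ultimately show ?thesis
    using assms(1) by (simp add: enn_root_le_ennreal_iff)
qed (simp add: enn_root_def)

lemma enn_root_SUP:
  assumes "p > 0"
  shows "enn_root p (SUP i\<in>I. f i) = (SUP i\<in>I. enn_root p (f i))"
proof (rule antisym)
  show "(SUP i\<in>I. enn_root p (f i)) \<le> enn_root p (SUP i\<in>I. f i)"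
    using assms by (intro SUP_least enn_root_mono SUP_upper)
next
  show "enn_root p (SUP i\<in>I. f i) \<le> (SUP i\<in>I. enn_root p (f i))"
  proof (cases "(SUP i\<in>I. enn_root p (f i))")
    case (real t)
    then have "f i \<le> ennreal (t powr p)" if "i \<in> I" for i
      using assms that SUP_upper[of i I "\<lambda>i. enn_root p (f i)"]
      by (simp add: enn_root_le_ennreal_iff)
    then have "(SUP i\<in>I. f i) \<le> ennreal (t powr p)"
      by (rule SUP_least)
    then show ?thesis
      using assms real by (simp add: enn_root_le_ennreal_iff)
  next
    case top
    then show ?thesis
      by (simp only: top_greatest)
  qed
qed

theorem mainTheorem2:
  fixes a w :: "nat \<Rightarrow> real" and p :: real
  assumes "1 \<le> p" and "weight_seq w"
  shows "(SUP \<sigma>\<in>{\<sigma>. bij \<sigma>}. weighted_val p w a \<sigma>) = (SUP \<sigma>\<in>{\<sigma>. inj \<sigma>}. weighted_val p w a \<sigma>)"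
proof -
  define c where "c k i = ennreal (\<bar>a k\<bar> powr p * w i)" for k i
  have "p > 0"
    using assms(1) by simp
  have "(SUP \<sigma>\<in>{\<sigma>. bij \<sigma>}. weighted_val p w a \<sigma>) = enn_root p (SUP \<sigma>\<in>{\<sigma>. bij \<sigma>}. \<Sum>i. c (\<sigma> i) i)"
    using \<open>p > 0\<close> by (simp add: enn_root_SUP weighted_val_def c_def)
  also have "\<dots> = enn_root p (SUP \<sigma>\<in>{\<sigma>. inj \<sigma>}. \<Sum>i. c (\<sigma> i) i)"
    by (simp only: SUP_bij_suminf_eq_SUP_inj)
  also have "\<dots> = (SUP \<sigma>\<in>{\<sigma>. inj \<sigma>}. weighted_val p w a \<sigma>)"
    using \<open>p > 0\<close> by (simp add: enn_root_SUP weighted_val_def c_def)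
  finally show ?thesis .
qed

end
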